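(* Let $p(x,y)$ be a real polynomial with $p(0,0)=0$, $\nabla p(0,0)=(0,0)$, $\dim\operatorname{Co}N_p=2$, such that for every $A\in\mathbb{N}^2$ the main $A$-quasi-homogeneous form of $p$ is nonnegative on $\mathbb{R}^2$. Let $A=(A_1,A_2)\in\mathcal{A}_p$. Write $\varphi_1^A=\sum_{i=1}^s a_ix^{\alpha_i}y^{\beta_i}$ with $a_i\neq0$, $\alpha_1>\dots>\alpha_s\ge0$, and $\varphi_2^A=\sum_{i=1}^v b_ix^{\chi_i}y^{\eta_i}$ with $b_i\neq0$, $\chi_1>\dots>\chi_v\ge0$. Then condition $(C1)_A$ holds (there is $(x_0,y_0)$ with $\varphi_1^A(x_0,y_0)=0$ and $\varphi_2^A(x_0,y_0)<0$) if and only if at least one of the following holds: (a) $\alpha_s>0$, $\chi_v=0$, and ($b_v<0$ or $\eta_v$ is not a positive even integer); (b) $\beta_1>0$, $\eta_1=0$, and ($b_1<0$ or $\chi_1$ is not a positive even integer); (c) there exists $u_0\in U_p(A)$ such that the system $x\neq0$, $y\neq0$, $x^{-A_2}y^{A_1}=u_0$, $x^{\chi_1}y^{\eta_1}g_2^A(u_0)<0$ has a real solution $(x,y)$.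
   Context: $\mathbb{N}=\{1,2,\dots\}$; $\mathbb{N}_0^2$ is the set of $(A_1,A_2)\in\mathbb{N}^2$ with $\gcd(A_1,A_2)=1$. $N_p$ is the support of $p$ (exponent vectors of terms with nonzero coefficients) and $\operatorname{Co}N_p$ its convex hull. For $A\in\mathbb{N}^2$ the main $A$-quasi-homogeneous form of $p$ is the sum of the terms of $p$ whose exponent vectors $k$ minimize $\langle A,k\rangle$ over $N_p$. For $A\in\mathbb{N}_0^2$, with $B_1^A<B_2^A<\dots$ the distinct values of $\langle A,k\rangle$, $k\in N_p$, $\varphi_i^A$ is the sum of the terms of $p$ with $\langle A,k\rangle=B_i^A$ (so $\varphi_1^A$ is the main form, and $\varphi_2^A\not\equiv0$ here). The characteristic polynomial of a form $\sum_i c_ix^{\gamma_i}y^{\delta_i}$ ($c_i\neq0$, $\gamma_1>\gamma_2>\dots$) from this decomposition is $\sum_i c_iu^{(\gamma_1-\gamma_i)/A_2}$; $g_1^A,g_2^A$ are those of $\varphi_1^A,\varphi_2^A$. $\mathcal{A}_p$ is the set of $A\in\mathbb{N}_0^2$ such that $\varphi_1^A$ has at least three terms, $g_1^A\ge0$ on $\mathbb{R}$, and $g_1^A$ has a real root; $U_p(A)$ is the set of real roots of $g_1^A$. *)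

theory Defs
  imports "HOL-Analysis.Analysis"
begin

text \<open>A real bivariate polynomial p(x,y) is represented by its coefficient function
  c :: nat \<times> nat \<Rightarrow> real (c (i,j) = coefficient of x^i y^j), with finite support.\<close>

type_synonym bipoly = "nat \<times> nat \<Rightarrow> real"

definition is_bipoly :: "bipoly \<Rightarrow> bool" where
  "is_bipoly c \<longleftrightarrow> finite {k. c k \<noteq> 0}"

definition Npoly :: "bipoly \<Rightarrow> (nat \<times> nat) set" where
  "Npoly c = {k. c k \<noteq> 0}"

definition peval :: "bipoly \<Rightarrow> real \<Rightarrow> real \<Rightarrow> real" where
  "peval c x y = (\<Sum>k\<in>Npoly c. c k * x ^ fst k * y ^ snd k)"

definition CoN :: "bipoly \<Rightarrow> (real \<times> real) set" where
  "CoN c = convex hull ((\<lambda>k. (real (fst k), real (snd k))) ` Npoly c)"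

definition ip :: "nat \<times> nat \<Rightarrow> nat \<times> nat \<Rightarrow> nat" where
  "ip A k = fst A * fst k + snd A * snd k"

definition level_form :: "bipoly \<Rightarrow> nat \<times> nat \<Rightarrow> nat \<Rightarrow> bipoly" where
  "level_form c A B = (\<lambda>k. if ip A k = B then c k else 0)"

definition main_form :: "bipoly \<Rightarrow> nat \<times> nat \<Rightarrow> bipoly" where
  "main_form c A = level_form c A (Min (ip A ` Npoly c))"

definition Npos2 :: "(nat \<times> nat) set" where
  "Npos2 = {A. fst A \<ge> 1 \<and> snd A \<ge> 1}"

definition N0_2 :: "(nat \<times> nat) set" where
  "N0_2 = {A. A \<in> Npos2 \<and> coprime (fst A) (snd A)}"

text \<open>B_1^A < B_2^A < ... : the distinct values of <A,k>, k in N_p, in increasing order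
  (0-indexed list), and phi_i^A (1-indexed).\<close>
definition levels :: "bipoly \<Rightarrow> nat \<times> nat \<Rightarrow> nat list" where
  "levels c A = sorted_list_of_set (ip A ` Npoly c)"

definition phi :: "bipoly \<Rightarrow> nat \<times> nat \<Rightarrow> nat \<Rightarrow> bipoly" where
  "phi c A i = level_form c A (levels c A ! (i - 1))"

definition xmax :: "bipoly \<Rightarrow> nat" where
  "xmax f = Max (fst ` Npoly f)"

definition xmin :: "bipoly \<Rightarrow> nat" where
  "xmin f = Min (fst ` Npoly f)"

definition first_term :: "bipoly \<Rightarrow> nat \<times> nat" where
  "first_term f = (THE k. k \<in> Npoly f \<and> fst k = xmax f)"

definition last_term :: "bipoly \<Rightarrow> nat \<times> nat" where
  "last_term f = (THE k. k \<in> Npoly f \<and> fst k = xmin f)"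

definition charpoly :: "bipoly \<Rightarrow> nat \<times> nat \<Rightarrow> real \<Rightarrow> real" where
  "charpoly f A u = (\<Sum>k\<in>Npoly f. f k * u ^ ((xmax f - fst k) div snd A))"

definition g :: "bipoly \<Rightarrow> nat \<times> nat \<Rightarrow> nat \<Rightarrow> real \<Rightarrow> real" where
  "g c A i = charpoly (phi c A i) A"

definition Aset :: "bipoly \<Rightarrow> (nat \<times> nat) set" where
  "Aset c = {A \<in> N0_2. card (Npoly (phi c A 1)) \<ge> 3
              \<and> (\<forall>u. g c A 1 u \<ge> 0) \<and> (\<exists>u. g c A 1 u = 0)}"

definition Uset :: "bipoly \<Rightarrow> nat \<times> nat \<Rightarrow> real set" where
  "Uset c A = {u. g c A 1 u = 0}"

definition C1 :: "bipoly \<Rightarrow> nat \<times> nat \<Rightarrow> bool" where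
  "C1 c A \<longleftrightarrow> (\<exists>x0 y0. peval (phi c A 1) x0 y0 = 0 \<and> peval (phi c A 2) x0 y0 < 0)"

end

theory Submission
  imports Defs
begin

(* The weighted degree <A,k> is constant on the support of each of phi_1 and phi_2, and
   A_1, A_2 > 0, so a term of such a form is determined by either of its exponents.  Hence on
   the axis x = 0 each form is at most the monomial of its last term, on y = 0 at most that of
   its first term, and (C1) restricted to an axis becomes a sign condition on a single
   monomial in one variable; this gives (a) and (b).  Off the axes, coprimality of A_1 and A_2
   lets such a form factor as x^chi y^eta g(x^(-A_2) y^(A_1)) with (chi, eta) its first term,
   so phi_1 vanishes exactly where x^(-A_2) y^(A_1) is a root of g_1; this gives (c).  The hypothesis dim Co N_p = 2 only
   guarantees that the support of p meets at least two levels of <A,.>, so that phi_2 is a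
   genuine form and not an out-of-range junk value. *)

lemma sign_of_monomial_witness_iff:
  fixes a1 a2 :: "'a::linordered_idom"
  assumes "a1 \<noteq> 0" "a2 \<noteq> 0" "P2 \<Longrightarrow> 0 < n2"
  shows "(\<exists>t. (if P1 then a1 * t ^ n1 else 0) = 0 \<and> (if P2 then a2 * t ^ n2 else 0) < 0) \<longleftrightarrow>
         \<not> P1 \<and> P2 \<and> (a2 < 0 \<or> \<not> (0 < n2 \<and> even n2))"
proof
  assume "\<exists>t. (if P1 then a1 * t ^ n1 else 0) = 0 \<and> (if P2 then a2 * t ^ n2 else 0) < 0"
  then obtain t where vanish: "(if P1 then a1 * t ^ n1 else 0) = 0"
    and neg: "(if P2 then a2 * t ^ n2 else 0) < 0" by blast
  then have P2 and neg': "a2 * t ^ n2 < 0" by (auto split: if_splits)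
  then have "t \<noteq> 0" using assms(3) by (auto simp: zero_power)
  then have "\<not> P1" using vanish assms(1) by auto
  moreover have "a2 < 0 \<or> \<not> (0 < n2 \<and> even n2)"
    using neg' zero_le_even_power[of n2 t] by (metis mult_nonneg_nonneg not_le)
  ultimately show "\<not> P1 \<and> P2 \<and> (a2 < 0 \<or> \<not> (0 < n2 \<and> even n2))" using \<open>P2\<close> by blast
next
  assume conds: "\<not> P1 \<and> P2 \<and> (a2 < 0 \<or> \<not> (0 < n2 \<and> even n2))"
  define t :: 'a where "t = (if a2 < 0 then 1 else -1)"
  have "a2 * t ^ n2 < 0" using conds assms(2,3) by (auto simp: t_def)
  then show "\<exists>t. (if P1 then a1 * t ^ n1 else 0) = 0 \<and> (if P2 then a2 * t ^ n2 else 0) < 0"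
    using conds by auto
qed

lemma ex_split_axes:
  fixes P :: "'a::zero \<Rightarrow> 'b::zero \<Rightarrow> bool"
  shows "(\<exists>x y. P x y) \<longleftrightarrow> (\<exists>y. P 0 y) \<or> (\<exists>x. P x 0) \<or> (\<exists>x y. x \<noteq> 0 \<and> y \<noteq> 0 \<and> P x y)"
  by metis

lemma peval_x_zero_eq_sum:
  "finite (Npoly f) \<Longrightarrow> peval f 0 y = (\<Sum>k\<in>{k \<in> Npoly f. fst k = 0}. f k * y ^ snd k)"
  unfolding peval_def by (auto simp: sum.inter_filter power_0_left intro!: sum.cong)

lemma peval_y_zero_eq_sum:
  "finite (Npoly f) \<Longrightarrow> peval f x 0 = (\<Sum>k\<in>{k \<in> Npoly f. snd k = 0}. f k * x ^ fst k)"
  unfolding peval_def by (auto simp: sum.inter_filter power_0_left intro!: sum.cong)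

lemma power_shift_monomial:
  fixes x y :: "'a::field"
  assumes "x \<noteq> 0"
  shows "x ^ (i + p * m) * y ^ j * (inverse (x ^ p) * y ^ q) ^ m = x ^ i * y ^ (j + q * m)"
proof -
  have "(inverse (x ^ p) * y ^ q) ^ m = inverse (x ^ (p * m)) * y ^ (q * m)"
    by (simp add: power_mult_distrib power_mult power_inverse)
  then show ?thesis using assms by (simp add: power_add mult.commute[of p m] mult.commute[of q m])
qed

locale quasi_homogeneous_form =
  fixes f :: bipoly and A :: "nat \<times> nat" and B :: nat
  assumes finite_Npoly: "finite (Npoly f)"
    and Npoly_nonempty: "Npoly f \<noteq> {}"
    and ip_Npoly: "k \<in> Npoly f \<Longrightarrow> ip A k = B"
    and weight_Npos2: "A \<in> Npos2"
begin

lemma inj_on_fst_Npoly: "inj_on fst (Npoly f)"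
proof (rule inj_onI)
  fix k l assume k: "k \<in> Npoly f" and l: "l \<in> Npoly f" and fst_eq: "fst k = fst l"
  have "ip A k = ip A l" using ip_Npoly[OF k] ip_Npoly[OF l] by simp
  then have "snd A * snd k = snd A * snd l" using fst_eq by (simp add: ip_def)
  then show "k = l" using fst_eq weight_Npos2 by (simp add: Npos2_def prod_eq_iff)
qed

lemma inj_on_snd_Npoly: "inj_on snd (Npoly f)"
proof (rule inj_onI)
  fix k l assume k: "k \<in> Npoly f" and l: "l \<in> Npoly f" and snd_eq: "snd k = snd l"
  have "ip A k = ip A l" using ip_Npoly[OF k] ip_Npoly[OF l] by simp
  then have "fst A * fst k = fst A * fst l" using snd_eq by (simp add: ip_def)
  then show "k = l" using snd_eq weight_Npos2 by (simp add: Npos2_def prod_eq_iff)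
qed

lemma fst_le_xmax: "k \<in> Npoly f \<Longrightarrow> fst k \<le> xmax f"
  unfolding xmax_def using finite_Npoly by simp

lemma xmin_le_fst: "k \<in> Npoly f \<Longrightarrow> xmin f \<le> fst k"
  unfolding xmin_def using finite_Npoly by simp

lemma the_term_with_fst:
  assumes "n \<in> fst ` Npoly f"
  shows "(THE k. k \<in> Npoly f \<and> fst k = n) \<in> Npoly f" "fst (THE k. k \<in> Npoly f \<and> fst k = n) = n"
proof -
  obtain k where k: "k \<in> Npoly f" "fst k = n" using assms by auto
  have "(THE k. k \<in> Npoly f \<and> fst k = n) = k"
    using k inj_on_fst_Npoly by (intro the_equality) (auto dest: inj_onD)
  then show "(THE k. k \<in> Npoly f \<and> fst k = n) \<in> Npoly f" "fst (THE k. k \<in> Npoly f \<and> fst k = n) = n"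
    using k by simp_all
qed

lemma first_term_in_Npoly: "first_term f \<in> Npoly f"
  and fst_first_term: "fst (first_term f) = xmax f"
  unfolding first_term_def xmax_def
  using the_term_with_fst Max_in finite_Npoly Npoly_nonempty by auto

lemma last_term_in_Npoly: "last_term f \<in> Npoly f"
  and fst_last_term: "fst (last_term f) = xmin f"
  unfolding last_term_def xmin_def
  using the_term_with_fst Min_in finite_Npoly Npoly_nonempty by auto

lemma snd_first_term_le:
  assumes k: "k \<in> Npoly f"
  shows "snd (first_term f) \<le> snd k"
proof -
  have "fst A * fst k \<le> fst A * fst (first_term f)"
    using fst_le_xmax[OF k] fst_first_term by simp
  moreover have "fst A * fst k + snd A * snd k = fst A * fst (first_term f) + snd A * snd (first_term f)"
    using ip_Npoly[OF k] ip_Npoly[OF first_term_in_Npoly] by (simp add: ip_def)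
  ultimately have "snd A * snd (first_term f) \<le> snd A * snd k" by linarith
  then show ?thesis using weight_Npos2 by (simp add: Npos2_def)
qed

lemma zero_notin_Npoly: "0 < B \<Longrightarrow> (0, 0) \<notin> Npoly f"
  using ip_Npoly[of "(0, 0)"] by (auto simp: ip_def)

lemma Npoly_fst_zero: "{k \<in> Npoly f. fst k = 0} = (if xmin f = 0 then {last_term f} else {})"
proof (cases "xmin f = 0")
  case True
  have fst_last: "fst (last_term f) = 0" using fst_last_term True by simp
  have "k = last_term f" if "k \<in> Npoly f" "fst k = 0" for k
    using inj_onD[OF inj_on_fst_Npoly, of k "last_term f"] that last_term_in_Npoly fst_last by simp
  then show ?thesis
    unfolding if_P[OF True] using last_term_in_Npoly fst_last by blast
next
  case False
  have "fst k \<noteq> 0" if "k \<in> Npoly f" for k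
    using xmin_le_fst[OF that] False by linarith
  then show ?thesis unfolding if_not_P[OF False] by blast
qed

lemma Npoly_snd_zero:
  "{k \<in> Npoly f. snd k = 0} = (if snd (first_term f) = 0 then {first_term f} else {})"
proof (cases "snd (first_term f) = 0")
  case True
  have "k = first_term f" if "k \<in> Npoly f" "snd k = 0" for k
    using inj_onD[OF inj_on_snd_Npoly, of k "first_term f"] that first_term_in_Npoly True by simp
  then show ?thesis unfolding if_P[OF True] using True first_term_in_Npoly by blast
next
  case False
  have "snd k \<noteq> 0" if "k \<in> Npoly f" for k
    using snd_first_term_le[OF that] False by linarith
  then show ?thesis unfolding if_not_P[OF False] by blast
qed

lemma peval_x_zero: "peval f 0 y = (if xmin f = 0 then f (last_term f) * y ^ snd (last_term f) else 0)"
  by (simp add: peval_x_zero_eq_sum[OF finite_Npoly] Npoly_fst_zero)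

lemma peval_y_zero:
  "peval f x 0 = (if snd (first_term f) = 0 then f (first_term f) * x ^ fst (first_term f) else 0)"
  by (simp add: peval_y_zero_eq_sum[OF finite_Npoly] Npoly_snd_zero)

(* Coprimality makes A_2 divide the x-exponent gap to the first term, so the division in
   charpoly is exact. *)
lemma exponents_from_first_term:
  assumes coprime: "coprime (fst A) (snd A)" and k: "k \<in> Npoly f"
  defines "m \<equiv> (xmax f - fst k) div snd A"
  shows "fst (first_term f) = fst k + snd A * m" "snd k = snd (first_term f) + fst A * m"
proof -
  define K where "K = first_term f"
  have fst_le: "fst k \<le> fst K" and snd_le: "snd K \<le> snd k"
    using fst_le_xmax[OF k] fst_first_term snd_first_term_le[OF k] by (simp_all add: K_def)
  have "fst A * fst k + snd A * snd k = fst A * fst K + snd A * snd K"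
    using ip_Npoly[OF k] ip_Npoly[OF first_term_in_Npoly] by (simp add: ip_def K_def)
  then have balance: "fst A * (fst K - fst k) = snd A * (snd k - snd K)"
    using fst_le snd_le by (simp add: diff_mult_distrib2)
  then have "snd A dvd fst K - fst k"
    using coprime by (metis coprime_commute coprime_dvd_mult_right_iff dvd_triv_left)
  then have fst_diff: "fst K - fst k = snd A * m"
    by (simp add: m_def K_def fst_first_term)
  then have "snd A * (fst A * m) = snd A * (snd k - snd K)"
    using balance by (metis mult.left_commute)
  then have "snd k - snd K = fst A * m" using weight_Npos2 by (simp add: Npos2_def)
  then show "fst (first_term f) = fst k + snd A * m" "snd k = snd (first_term f) + fst A * m"
    using fst_diff fst_le snd_le by (simp_all add: K_def)
qed

lemma peval_eq_charpoly:
  assumes coprime: "coprime (fst A) (snd A)" and "x \<noteq> 0"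
  shows "peval f x y = x ^ fst (first_term f) * y ^ snd (first_term f)
           * charpoly f A (inverse (x ^ snd A) * y ^ fst A)"
proof -
  have "f k * x ^ fst k * y ^ snd k = x ^ fst (first_term f) * y ^ snd (first_term f) *
          (f k * (inverse (x ^ snd A) * y ^ fst A) ^ ((xmax f - fst k) div snd A))"
    if k: "k \<in> Npoly f" for k
  proof -
    note exps = exponents_from_first_term[OF coprime k]
    have shift: "x ^ fst (first_term f) * y ^ snd (first_term f) *
          (inverse (x ^ snd A) * y ^ fst A) ^ ((xmax f - fst k) div snd A) = x ^ fst k * y ^ snd k"
      unfolding exps by (rule power_shift_monomial[OF \<open>x \<noteq> 0\<close>])
    have "x ^ fst (first_term f) * y ^ snd (first_term f) *
          (f k * (inverse (x ^ snd A) * y ^ fst A) ^ ((xmax f - fst k) div snd A)) =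
          f k * (x ^ fst (first_term f) * y ^ snd (first_term f) *
          (inverse (x ^ snd A) * y ^ fst A) ^ ((xmax f - fst k) div snd A))"
      by (simp only: ac_simps)
    also have "\<dots> = f k * (x ^ fst k * y ^ snd k)"
      by (simp only: shift)
    finally show ?thesis by (simp only: mult.assoc)
  qed
  then show ?thesis
    unfolding peval_def charpoly_def sum_distrib_left by (intro sum.cong) auto
qed

end

lemma sign_witness_x_zero_iff:
  assumes "quasi_homogeneous_form f1 A B1" "quasi_homogeneous_form f2 A B2" "0 < B2"
  shows "(\<exists>y. peval f1 0 y = 0 \<and> peval f2 0 y < 0) \<longleftrightarrow>
    0 < xmin f1 \<and> xmin f2 = 0 \<and>
    (f2 (last_term f2) < 0 \<or> \<not> (0 < snd (last_term f2) \<and> even (snd (last_term f2))))"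
proof -
  interpret F1: quasi_homogeneous_form f1 A B1 by fact
  interpret F2: quasi_homogeneous_form f2 A B2 by fact
  have "0 < snd (last_term f2)" if "xmin f2 = 0"
    using F2.last_term_in_Npoly F2.fst_last_term F2.zero_notin_Npoly[OF \<open>0 < B2\<close>] that
    by (metis gr0I prod.collapse)
  moreover have "f1 (last_term f1) \<noteq> 0" "f2 (last_term f2) \<noteq> 0"
    using F1.last_term_in_Npoly F2.last_term_in_Npoly by (simp_all add: Npoly_def)
  ultimately show ?thesis
    unfolding F1.peval_x_zero F2.peval_x_zero
    by (subst sign_of_monomial_witness_iff) auto
qed

lemma sign_witness_y_zero_iff:
  assumes "quasi_homogeneous_form f1 A B1" "quasi_homogeneous_form f2 A B2" "0 < B2"
  shows "(\<exists>x. peval f1 x 0 = 0 \<and> peval f2 x 0 < 0) \<longleftrightarrow>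
    0 < snd (first_term f1) \<and> snd (first_term f2) = 0 \<and>
    (f2 (first_term f2) < 0 \<or> \<not> (0 < fst (first_term f2) \<and> even (fst (first_term f2))))"
proof -
  interpret F1: quasi_homogeneous_form f1 A B1 by fact
  interpret F2: quasi_homogeneous_form f2 A B2 by fact
  have "0 < fst (first_term f2)" if "snd (first_term f2) = 0"
    using F2.first_term_in_Npoly F2.zero_notin_Npoly[OF \<open>0 < B2\<close>] that
    by (metis gr0I prod.collapse)
  moreover have "f1 (first_term f1) \<noteq> 0" "f2 (first_term f2) \<noteq> 0"
    using F1.first_term_in_Npoly F2.first_term_in_Npoly by (simp_all add: Npoly_def)
  ultimately show ?thesis
    unfolding F1.peval_y_zero F2.peval_y_zero
    by (subst sign_of_monomial_witness_iff) auto
qed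

lemma sign_witness_off_axes_iff:
  assumes "quasi_homogeneous_form f1 A B1" "quasi_homogeneous_form f2 A B2"
    and coprime: "coprime (fst A) (snd A)"
  shows "(\<exists>x y. x \<noteq> 0 \<and> y \<noteq> 0 \<and> peval f1 x y = 0 \<and> peval f2 x y < 0) \<longleftrightarrow>
    (\<exists>u0. charpoly f1 A u0 = 0 \<and> (\<exists>x y. x \<noteq> 0 \<and> y \<noteq> 0 \<and> inverse (x ^ snd A) * y ^ fst A = u0 \<and>
       x ^ fst (first_term f2) * y ^ snd (first_term f2) * charpoly f2 A u0 < 0))"
proof -
  interpret F1: quasi_homogeneous_form f1 A B1 by fact
  interpret F2: quasi_homogeneous_form f2 A B2 by fact
  have "peval f1 x y = 0 \<and> peval f2 x y < 0 \<longleftrightarrow>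
      charpoly f1 A u = 0 \<and> x ^ fst (first_term f2) * y ^ snd (first_term f2) * charpoly f2 A u < 0"
    if "x \<noteq> 0" "y \<noteq> 0" "inverse (x ^ snd A) * y ^ fst A = u" for x y u
    using F1.peval_eq_charpoly[OF coprime \<open>x \<noteq> 0\<close>, of y]
      F2.peval_eq_charpoly[OF coprime \<open>x \<noteq> 0\<close>, of y] that by simp
  then show ?thesis by blast
qed

lemma card_levels_ge_two:
  assumes "aff_dim (CoN c) = 2" "finite (Npoly c)" "A \<noteq> (0, 0)"
  shows "2 \<le> card (ip A ` Npoly c)"
proof (rule ccontr)
  assume "\<not> 2 \<le> card (ip A ` Npoly c)"
  then have "card (ip A ` Npoly c) \<le> Suc 0" by linarith
  then have "\<forall>a1\<in>ip A ` Npoly c. \<forall>a2\<in>ip A ` Npoly c. a1 = a2"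
    by (rule card_le_Suc0_iff_eq[OF finite_imageI[OF assms(2)], THEN iffD1])
  then obtain B where B: "ip A ` Npoly c \<subseteq> {B}"
    by (metis empty_subsetI equals0I insert_subsetI subsetI singletonI singleton_iff)
  define a :: "real \<times> real" where "a = (real (fst A), real (snd A))"
  have "a \<noteq> 0" using assms(3) by (auto simp: a_def zero_prod_def prod_eq_iff)
  have "(\<lambda>k. (real (fst k), real (snd k))) ` Npoly c \<subseteq> {z. a \<bullet> z = real B}"
  proof
    fix z assume "z \<in> (\<lambda>k. (real (fst k), real (snd k))) ` Npoly c"
    then obtain k where k: "k \<in> Npoly c" "z = (real (fst k), real (snd k))" by auto
    have "real (ip A k) = real B" using B k by auto
    then show "z \<in> {z. a \<bullet> z = real B}" using k by (simp add: a_def inner_Pair ip_def)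
  qed
  then have "aff_dim (CoN c) \<le> aff_dim {z. a \<bullet> z = real B}"
    unfolding CoN_def aff_dim_convex_hull by (rule aff_dim_subset)
  also have "\<dots> = 1" using \<open>a \<noteq> 0\<close> by simp
  finally show False using assms(1) by simp
qed

lemma phi_first_two_levelsE:
  assumes "finite (Npoly c)" "2 \<le> card (ip A ` Npoly c)"
  obtains B1 B2 where "B1 < B2" "B1 \<in> ip A ` Npoly c" "B2 \<in> ip A ` Npoly c"
    "phi c A 1 = level_form c A B1" "phi c A 2 = level_form c A B2"
proof
  let ?L = "levels c A"
  have "set ?L = ip A ` Npoly c" "sorted_wrt (<) ?L" "length ?L = card (ip A ` Npoly c)"
    using assms(1) by (simp_all add: levels_def)
  then show "?L ! 0 < ?L ! 1" "?L ! 0 \<in> ip A ` Npoly c" "?L ! 1 \<in> ip A ` Npoly c"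
    using assms(2) nth_mem[of 0 ?L] nth_mem[of 1 ?L] by (auto simp: sorted_wrt_iff_nth_less)
  show "phi c A 1 = level_form c A (?L ! 0)" "phi c A 2 = level_form c A (?L ! 1)"
    by (simp_all add: phi_def)
qed

lemma level_form_quasi_homogeneous:
  assumes "finite (Npoly c)" "A \<in> Npos2" "B \<in> ip A ` Npoly c"
  shows "quasi_homogeneous_form (level_form c A B) A B"
proof -
  have "Npoly (level_form c A B) = {k \<in> Npoly c. ip A k = B}"
    by (auto simp: Npoly_def level_form_def)
  then show ?thesis using assms by unfold_locales auto
qed

theorem mainTheorem6:
  fixes c :: bipoly and A :: "nat \<times> nat"
  assumes poly: "is_bipoly c"
    and zero: "peval c 0 0 = 0"
    and gradx: "((\<lambda>x. peval c x 0) has_real_derivative 0) (at 0)"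
    and grady: "((\<lambda>y. peval c 0 y) has_real_derivative 0) (at 0)"
    and dim2: "aff_dim (CoN c) = 2"
    and mainnonneg: "\<forall>B\<in>Npos2. \<forall>x y. peval (main_form c B) x y \<ge> 0"
    and A: "A \<in> Aset c"
  shows "C1 c A \<longleftrightarrow>
     ((xmin (phi c A 1) > 0 \<and> xmin (phi c A 2) = 0 \<and>
        (phi c A 2 (last_term (phi c A 2)) < 0
         \<or> \<not> (snd (last_term (phi c A 2)) > 0 \<and> even (snd (last_term (phi c A 2))))))
    \<or> (snd (first_term (phi c A 1)) > 0 \<and> snd (first_term (phi c A 2)) = 0 \<and>
        (phi c A 2 (first_term (phi c A 2)) < 0
         \<or> \<not> (fst (first_term (phi c A 2)) > 0 \<and> even (fst (first_term (phi c A 2))))))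
    \<or> (\<exists>u0\<in>Uset c A. \<exists>x y::real. x \<noteq> 0 \<and> y \<noteq> 0 \<and>
          inverse (x ^ snd A) * y ^ fst A = u0 \<and>
          x ^ fst (first_term (phi c A 2)) * y ^ snd (first_term (phi c A 2)) * g c A 2 u0 < 0))"
proof -
  have A_pos: "A \<in> Npos2" and coprime: "coprime (fst A) (snd A)"
    using A by (auto simp: Aset_def N0_2_def)
  have fin: "finite (Npoly c)" using poly by (simp add: is_bipoly_def Npoly_def)
  have "A \<noteq> (0, 0)" using A_pos by (auto simp: Npos2_def)
  then obtain B1 B2 where "B1 < B2" "B1 \<in> ip A ` Npoly c" "B2 \<in> ip A ` Npoly c"
    and phi1: "phi c A 1 = level_form c A B1" and phi2: "phi c A 2 = level_form c A B2"
    using phi_first_two_levelsE[OF fin card_levels_ge_two[OF dim2 fin]] by blast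
  then have qh1: "quasi_homogeneous_form (phi c A 1) A B1"
    and qh2: "quasi_homogeneous_form (phi c A 2) A B2" and "0 < B2"
    using level_form_quasi_homogeneous[OF fin A_pos] by auto
  have "C1 c A \<longleftrightarrow>
      (\<exists>y. peval (phi c A 1) 0 y = 0 \<and> peval (phi c A 2) 0 y < 0)
    \<or> (\<exists>x. peval (phi c A 1) x 0 = 0 \<and> peval (phi c A 2) x 0 < 0)
    \<or> (\<exists>x y. x \<noteq> 0 \<and> y \<noteq> 0 \<and> peval (phi c A 1) x y = 0 \<and> peval (phi c A 2) x y < 0)"
    unfolding C1_def by (rule ex_split_axes)
  then show ?thesis
    unfolding sign_witness_x_zero_iff[OF qh1 qh2 \<open>0 < B2\<close>]
      sign_witness_y_zero_iff[OF qh1 qh2 \<open>0 < B2\<close>]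
      sign_witness_off_axes_iff[OF qh1 qh2 coprime]
    by (simp add: Uset_def g_def)
qed

end
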